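(* Under the setting of Algorithm 4 with $\sigma>0$, $f\in\mathcal{H}_k$, $g\in\mathcal{H}_{\sigma^2\delta}$, $h=f+g$, and all queried points pairwise distinct, let $X_n=(x_{(n-1)L+1},\dots,x_{nL})$ be the batch selected at round $n$ and $x^*\in\arg\max_{\mathcal{X}}f$. Then $$\frac1L\sum_{i=1}^L\big(f(x^* )-f(x_{(n-1)L+i})\big)\le2\|h\|_{\mathcal{H}_{k^\sigma}}\sqrt{\frac{\operatorname{tr}(\widehat{\operatorname{cov}}_{n-1}(X_n,X_n))}{L}}+2\big(\|h\|_{\mathcal{H}_{k^\sigma}}+\|g\|_{\mathcal{H}_{\sigma^2\delta}}\big)\sigma.$$
   Context: $\delta(x,y)=1$ if $x=y$, else $0$; $k^\sigma=k+\sigma^2\delta$; $\mathcal{H}_{\sigma^2\delta}$ is the RKHS of $\sigma^2\delta$. Observations are $y_i=h(x_i)$; $\widehat m_t(x)=\mathbf{k}_t(x)^T(\mathbf{K}_t+\sigma^2I)^{-1}\mathbf{y}_t$ with $\mathbf{k}_t(x)=[k(x,x_i)]_{i\le t}$, $\mathbf{K}_t=[k(x_i,x_j)]_{i,j\le t}$. $\overline X_n=\{x_1,\dots,x_{nL}\}$; $\widehat{\operatorname{cov}}_n(X,X)=\mathbf{K}(X,X)-\mathbf{K}(\overline X_n,X)^T(\sigma^2I+\mathbf{K}(\overline X_n,\overline X_n))^{-1}\mathbf{K}(\overline X_n,X)$, $\widehat{\operatorname{cov}}_0=\mathbf{K}(X,X)$. Algorithm 4: $X_n$ maximizes over $X=(z_1,\dots,z_L)\in\mathcal{X}^L$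 the quantity $\frac1L\sum_i\widehat m_{(n-1)L}(z_i)+\|h\|_{\mathcal{H}_{k^\sigma}}\big(2\sqrt{\operatorname{tr}(\widehat{\operatorname{cov}}_{n-1}(X,X))/L}-\sqrt{\mathbf 1^T\widehat{\operatorname{cov}}_{n-1}(X,X)\mathbf 1/L^2}\big)$. *)

theory Defs
  imports "HOL-Analysis.Analysis" "Jordan_Normal_Form.Gauss_Jordan_Elimination"
begin

definition kdelta :: "'a \<Rightarrow> 'a \<Rightarrow> real" where
  "kdelta x y = (if x = y then 1 else 0)"

definition pd_kernel :: "('a \<Rightarrow> 'a \<Rightarrow> real) \<Rightarrow> bool" where
  "pd_kernel k \<longleftrightarrow> (\<forall>x y. k x y = k y x) \<and>
     (\<forall>(m::nat) (xs::nat \<Rightarrow> 'a) (a::nat \<Rightarrow> real).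
        0 \<le> (\<Sum>i<m. \<Sum>j<m. a i * a j * k (xs i) (xs j)))"

(* squared RKHS norm via the Aronszajn/Moore characterization:
   ||f||^2 = sup { (sum_i a_i f(x_i))^2 : sum_ij a_i a_j k(x_i,x_j) <= 1 } *)
definition rkhs_test_values :: "('a \<Rightarrow> 'a \<Rightarrow> real) \<Rightarrow> ('a \<Rightarrow> real) \<Rightarrow> real set" where
  "rkhs_test_values k f = {(\<Sum>i<m. a i * f (xs i))\<^sup>2 | (m::nat) (xs::nat \<Rightarrow> 'a) (a::nat \<Rightarrow> real).
       (\<Sum>i<m. \<Sum>j<m. a i * a j * k (xs i) (xs j)) \<le> 1}"

definition in_rkhs :: "('a \<Rightarrow> 'a \<Rightarrow> real) \<Rightarrow> ('a \<Rightarrow> real) \<Rightarrow> bool" where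
  "in_rkhs k f \<longleftrightarrow> bdd_above (rkhs_test_values k f)"

definition rkhs_norm :: "('a \<Rightarrow> 'a \<Rightarrow> real) \<Rightarrow> ('a \<Rightarrow> real) \<Rightarrow> real" where
  "rkhs_norm k f = sqrt (Sup (rkhs_test_values k f))"

definition kmat :: "('a \<Rightarrow> 'a \<Rightarrow> real) \<Rightarrow> 'a list \<Rightarrow> 'a list \<Rightarrow> real mat" where
  "kmat k xs ys = mat (length xs) (length ys) (\<lambda>(i,j). k (xs ! i) (ys ! j))"

definition reg_inv :: "('a \<Rightarrow> 'a \<Rightarrow> real) \<Rightarrow> real \<Rightarrow> 'a list \<Rightarrow> real mat" where
  "reg_inv k \<sigma> Xb = the (mat_inverse (\<sigma>\<^sup>2 \<cdot>\<^sub>m 1\<^sub>m (length Xb) + kmat k Xb Xb))"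

definition post_mean :: "('a \<Rightarrow> 'a \<Rightarrow> real) \<Rightarrow> real \<Rightarrow> ('a \<Rightarrow> real) \<Rightarrow> 'a list \<Rightarrow> 'a \<Rightarrow> real" where
  "post_mean k \<sigma> h Xb z =
     vec (length Xb) (\<lambda>i. k z (Xb ! i)) \<bullet> (reg_inv k \<sigma> Xb *\<^sub>v vec_of_list (map h Xb))"

definition post_cov :: "('a \<Rightarrow> 'a \<Rightarrow> real) \<Rightarrow> real \<Rightarrow> 'a list \<Rightarrow> 'a list \<Rightarrow> real mat" where
  "post_cov k \<sigma> Xb X =
     kmat k X X - transpose_mat (kmat k Xb X) * reg_inv k \<sigma> Xb * kmat k Xb X"

definition mat_trace :: "real mat \<Rightarrow> real" where
  "mat_trace A = (\<Sum>i<dim_row A. A $$ (i, i))"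

definition mat_total :: "real mat \<Rightarrow> real" where
  "mat_total A = (\<Sum>i<dim_row A. \<Sum>j<dim_col A. A $$ (i, j))"

definition queried :: "(nat \<Rightarrow> 'a) \<Rightarrow> nat \<Rightarrow> 'a list" where
  "queried x t = map x [1..<t+1]"

definition batch :: "(nat \<Rightarrow> 'a) \<Rightarrow> nat \<Rightarrow> nat \<Rightarrow> 'a list" where
  "batch x L n = map x [(n-1)*L+1..<n*L+1]"

(* acquisition function of Algorithm 4 at round n, given ||h||_{H_{k^sigma}} = B *)
definition acq :: "('a \<Rightarrow> 'a \<Rightarrow> real) \<Rightarrow> real \<Rightarrow> ('a \<Rightarrow> real) \<Rightarrow> real \<Rightarrow> (nat \<Rightarrow> 'a)
                   \<Rightarrow> nat \<Rightarrow> nat \<Rightarrow> 'a list \<Rightarrow> real" where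
  "acq k \<sigma> h B x L n Z =
     (let Xb = queried x ((n-1)*L); C = post_cov k \<sigma> Xb Z in
      (1 / real L) * (\<Sum>z\<leftarrow>Z. post_mean k \<sigma> h Xb z)
      + B * (2 * sqrt (mat_trace C / real L) - sqrt (mat_total C / (real L)\<^sup>2)))"

end

theory Submission
  imports Defs "Jordan_Normal_Form.Determinant"
begin

(* Every linear combination of values of h is bounded by ||h|| times the norm of the matching
   combination of kernel sections, the RKHS norm being a supremum over such combinations. As the
   queried points are distinct, the Gram matrix of k + sigma^2 delta on them is K + sigma^2 I, and a
   suitable combination turns the summed posterior error on the batch into a functional of norm
   sqrt (1^T cov 1 + L sigma^2); the error at xstar is bounded likewise. The chosen batch beats the
   batch of L copies of xstar, whose acquisition value is m(xstar) + ||h|| sqrt (var xstar), and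
   |g| <= ||g|| sigma converts between h and f. *)

abbreviation noise_kernel :: "real \<Rightarrow> 'a \<Rightarrow> 'a \<Rightarrow> real" where
  "noise_kernel \<sigma> \<equiv> \<lambda>u v. \<sigma>\<^sup>2 * kdelta u v"

abbreviation noisy_kernel :: "('a \<Rightarrow> 'a \<Rightarrow> real) \<Rightarrow> real \<Rightarrow> 'a \<Rightarrow> 'a \<Rightarrow> real" where
  "noisy_kernel k \<sigma> \<equiv> \<lambda>u v. k u v + \<sigma>\<^sup>2 * kdelta u v"

definition kernel_quad_form :: "('a \<Rightarrow> 'a \<Rightarrow> real) \<Rightarrow> (nat \<Rightarrow> 'a) \<Rightarrow> (nat \<Rightarrow> real) \<Rightarrow> nat \<Rightarrow> real"
  where "kernel_quad_form K xs a m = (\<Sum>i<m. \<Sum>j<m. a i * a j * K (xs i) (xs j))"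

lemma kernel_quad_form_scale:
  "kernel_quad_form K xs (\<lambda>i. c * a i) m = c\<^sup>2 * kernel_quad_form K xs a m"
  unfolding kernel_quad_form_def power2_eq_square by (simp add: sum_distrib_left ac_simps)

lemma kernel_quad_form_add:
  "kernel_quad_form (\<lambda>u v. K1 u v + K2 u v) xs a m =
   kernel_quad_form K1 xs a m + kernel_quad_form K2 xs a m"
  unfolding kernel_quad_form_def by (simp add: distrib_left sum.distrib)

lemma pd_kernel_quad_form_nonneg: "pd_kernel K \<Longrightarrow> 0 \<le> kernel_quad_form K xs a m"
  unfolding pd_kernel_def kernel_quad_form_def by blast

lemma pd_kernel_sym: "pd_kernel K \<Longrightarrow> K x y = K y x"
  unfolding pd_kernel_def by blast

lemma pd_kernel_add:
  assumes "pd_kernel K1" "pd_kernel K2"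
  shows "pd_kernel (\<lambda>u v. K1 u v + K2 u v)"
  unfolding pd_kernel_def
proof (intro conjI allI)
  fix x y
  show "K1 x y + K2 x y = K1 y x + K2 y x" using assms by (simp add: pd_kernel_sym)
next
  fix m :: nat and xs a
  show "0 \<le> (\<Sum>i<m. \<Sum>j<m. a i * a j * (K1 (xs i) (xs j) + K2 (xs i) (xs j)))"
    using kernel_quad_form_add[of K1 K2 xs a m] pd_kernel_quad_form_nonneg[OF assms(1), of xs a m]
      pd_kernel_quad_form_nonneg[OF assms(2), of xs a m]
    unfolding kernel_quad_form_def by linarith
qed

text \<open>Grouping the test points by value turns the quadratic form of the Kronecker delta into a
  sum of squares.\<close>

lemma kdelta_quad_form_nonneg: "0 \<le> kernel_quad_form kdelta xs a m"
proof -
  let ?A = "{..<m::nat}"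
  define S where "S v = (\<Sum>j\<in>{j\<in>?A. xs j = v}. a j)" for v
  have "kernel_quad_form kdelta xs a m = (\<Sum>i\<in>?A. a i * S (xs i))"
    unfolding kernel_quad_form_def S_def
  proof (rule sum.cong[OF refl])
    fix i
    have "(\<Sum>j<m. a i * a j * kdelta (xs i) (xs j)) = a i * (\<Sum>j\<in>?A. if xs j = xs i then a j else 0)"
      by (simp add: kdelta_def sum_distrib_left) (intro sum.cong, auto)
    also have "(\<Sum>j\<in>?A. if xs j = xs i then a j else 0) = (\<Sum>j\<in>{j\<in>?A. xs j = xs i}. a j)"
      by (rule sum.inter_filter[symmetric]) simp
    finally show "(\<Sum>j<m. a i * a j * kdelta (xs i) (xs j)) = a i * (\<Sum>j\<in>{j\<in>?A. xs j = xs i}. a j)" .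
  qed
  also have "\<dots> = (\<Sum>v\<in>xs ` ?A. \<Sum>i\<in>{i. i \<in> ?A \<and> xs i = v}. a i * S (xs i))"
    by (rule sum.image_gen) simp
  also have "\<dots> = (\<Sum>v\<in>xs ` ?A. S v * S v)"
    unfolding S_def by (intro sum.cong refl) (simp add: sum_distrib_right)
  also have "\<dots> \<ge> 0" by (intro sum_nonneg) simp
  finally show ?thesis .
qed

lemma pd_kernel_noise: "pd_kernel (noise_kernel \<sigma>)"
  unfolding pd_kernel_def
proof (intro conjI allI)
  fix x y :: 'a
  show "\<sigma>\<^sup>2 * kdelta x y = \<sigma>\<^sup>2 * kdelta y x" by (simp add: kdelta_def)
next
  fix m :: nat and xs :: "nat \<Rightarrow> 'a" and a :: "nat \<Rightarrow> real"
  have "(\<Sum>i<m. \<Sum>j<m. a i * a j * (\<sigma>\<^sup>2 * kdelta (xs i) (xs j))) = \<sigma>\<^sup>2 * kernel_quad_form kdelta xs a m"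
    unfolding kernel_quad_form_def by (simp add: sum_distrib_left ac_simps)
  then show "0 \<le> (\<Sum>i<m. \<Sum>j<m. a i * a j * (\<sigma>\<^sup>2 * kdelta (xs i) (xs j)))"
    using kdelta_quad_form_nonneg[of xs a m] by (simp add: mult_nonneg_nonneg)
qed

lemma pd_kernel_noisy: "pd_kernel k \<Longrightarrow> pd_kernel (noisy_kernel k \<sigma>)"
  using pd_kernel_add[OF _ pd_kernel_noise] .

section \<open>Reproducing kernel Hilbert space norm\<close>

lemma rkhs_test_valuesI:
  "kernel_quad_form K xs a m \<le> 1 \<Longrightarrow> (\<Sum>i<m. a i * h (xs i))\<^sup>2 \<in> rkhs_test_values K h"
  unfolding rkhs_test_values_def kernel_quad_form_def by blast

lemma rkhs_test_valuesE:
  assumes "t \<in> rkhs_test_values K h"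
  obtains m xs a where "t = (\<Sum>i<m. a i * h (xs i))\<^sup>2" "kernel_quad_form K xs a m \<le> 1"
  using assms unfolding rkhs_test_values_def kernel_quad_form_def by blast

lemma rkhs_test_values_zero: "0 \<in> rkhs_test_values K h"
  using rkhs_test_valuesI[of K _ "\<lambda>_. 0" 0 h] by (simp add: kernel_quad_form_def)

lemma rkhs_norm_nonneg: "in_rkhs K h \<Longrightarrow> 0 \<le> rkhs_norm K h"
  unfolding rkhs_norm_def in_rkhs_def using cSup_upper[OF rkhs_test_values_zero] by simp

lemma rkhs_norm_power2: "in_rkhs K h \<Longrightarrow> (rkhs_norm K h)\<^sup>2 = Sup (rkhs_test_values K h)"
  unfolding rkhs_norm_def in_rkhs_def
  using cSup_upper[OF rkhs_test_values_zero] by simp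

text \<open>Rescaling the coefficients to quadratic form \<open>1\<close> gives the bound when the form is positive;
  when it vanishes, arbitrarily large rescalings force the linear functional to vanish too.\<close>

lemma rkhs_lin_comb_power2_le:
  assumes rk: "in_rkhs K h" and q: "0 \<le> kernel_quad_form K xs a m"
  shows "(\<Sum>i<m. a i * h (xs i))\<^sup>2 \<le> (rkhs_norm K h)\<^sup>2 * kernel_quad_form K xs a m"
proof -
  define S where "S = Sup (rkhs_test_values K h)"
  define s where "s = (\<Sum>i<m. a i * h (xs i))"
  define qf where "qf = kernel_quad_form K xs a m"
  have S0: "0 \<le> S"
    using rkhs_norm_power2[OF rk] unfolding S_def by (metis zero_le_power2)
  have scaled: "(c * s)\<^sup>2 \<le> S" if "c\<^sup>2 * qf \<le> 1" for c
  proof -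
    have "(\<Sum>i<m. (c * a i) * h (xs i)) = c * s"
      unfolding s_def by (simp add: sum_distrib_left mult.assoc)
    moreover have "kernel_quad_form K xs (\<lambda>i. c * a i) m \<le> 1"
      using that unfolding qf_def kernel_quad_form_scale .
    ultimately have "(c * s)\<^sup>2 \<in> rkhs_test_values K h"
      using rkhs_test_valuesI by metis
    then show ?thesis
      unfolding S_def using rk[unfolded in_rkhs_def] by (rule cSup_upper)
  qed
  have "s\<^sup>2 \<le> S * qf"
  proof (cases "qf > 0")
    case True
    have "(s / sqrt qf)\<^sup>2 \<le> S"
      using scaled[of "1 / sqrt qf"] True by (simp add: power_divide)
    then show ?thesis using True by (simp add: power_divide divide_le_eq)
  next
    case False
    then have qf0: "qf = 0" using q unfolding qf_def by simp
    have "s = 0"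
    proof (rule ccontr)
      assume "s \<noteq> 0"
      then have "(sqrt (S + 1) / s * s)\<^sup>2 = S + 1" using S0 by simp
      moreover have "(sqrt (S + 1) / s * s)\<^sup>2 \<le> S" by (rule scaled) (simp add: qf0)
      ultimately show False by simp
    qed
    then show ?thesis using qf0 by simp
  qed
  then show ?thesis
    unfolding rkhs_norm_power2[OF rk] S_def s_def qf_def by (simp add: mult.commute)
qed

lemma abs_le_mult_sqrt_of_power2_le:
  fixes d B X :: real
  assumes "d\<^sup>2 \<le> B\<^sup>2 * X" "0 \<le> B"
  shows "\<bar>d\<bar> \<le> B * sqrt X"
proof -
  have "\<bar>d\<bar> = sqrt (d\<^sup>2)" by simp
  also have "\<dots> \<le> sqrt (B\<^sup>2 * X)" using assms(1) by (rule real_sqrt_le_mono)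
  also have "\<dots> = B * sqrt X" using assms(2) by (simp add: real_sqrt_mult)
  finally show ?thesis .
qed

lemma rkhs_lin_comb_abs_le:
  assumes "in_rkhs K h" "0 \<le> kernel_quad_form K xs a m"
  shows "\<bar>\<Sum>i<m. a i * h (xs i)\<bar> \<le> rkhs_norm K h * sqrt (kernel_quad_form K xs a m)"
  using rkhs_lin_comb_power2_le[OF assms] rkhs_norm_nonneg[OF assms(1)]
  by (intro abs_le_mult_sqrt_of_power2_le) simp_all

lemma rkhs_abs_le:
  assumes "in_rkhs K h" "0 \<le> K z z"
  shows "\<bar>h z\<bar> \<le> rkhs_norm K h * sqrt (K z z)"
  using rkhs_lin_comb_abs_le[OF assms(1), of "\<lambda>_. z" "\<lambda>_. 1" 1] assms(2)
  by (simp add: kernel_quad_form_def)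

lemma in_rkhs_add:
  assumes pd: "pd_kernel K1" "pd_kernel K2" and f: "in_rkhs K1 f" and g: "in_rkhs K2 g"
  shows "in_rkhs (\<lambda>u v. K1 u v + K2 u v) (\<lambda>z. f z + g z)"
proof -
  let ?F = "rkhs_norm K1 f" and ?G = "rkhs_norm K2 g"
  have "t \<le> (?F + ?G)\<^sup>2" if t_mem: "t \<in> rkhs_test_values (\<lambda>u v. K1 u v + K2 u v) (\<lambda>z. f z + g z)" for t
  proof -
    obtain m xs a where t: "t = (\<Sum>i<m. a i * (f (xs i) + g (xs i)))\<^sup>2"
      and "kernel_quad_form (\<lambda>u v. K1 u v + K2 u v) xs a m \<le> 1"
      by (rule rkhs_test_valuesE[OF t_mem])
    then have q: "kernel_quad_form K1 xs a m + kernel_quad_form K2 xs a m \<le> 1"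
      by (simp add: kernel_quad_form_add)
    have q1: "0 \<le> kernel_quad_form K1 xs a m" and q2: "0 \<le> kernel_quad_form K2 xs a m"
      using pd by (simp_all add: pd_kernel_quad_form_nonneg)
    have "\<bar>\<Sum>i<m. a i * f (xs i)\<bar> \<le> ?F * sqrt (kernel_quad_form K1 xs a m)"
      by (rule rkhs_lin_comb_abs_le[OF f q1])
    also have "\<dots> \<le> ?F"
      using q q1 q2 rkhs_norm_nonneg[OF f] by (intro mult_left_le) auto
    finally have bf: "\<bar>\<Sum>i<m. a i * f (xs i)\<bar> \<le> ?F" .
    have "\<bar>\<Sum>i<m. a i * g (xs i)\<bar> \<le> ?G * sqrt (kernel_quad_form K2 xs a m)"
      by (rule rkhs_lin_comb_abs_le[OF g q2])
    also have "\<dots> \<le> ?G"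
      using q q1 q2 rkhs_norm_nonneg[OF g] by (intro mult_left_le) auto
    finally have bg: "\<bar>\<Sum>i<m. a i * g (xs i)\<bar> \<le> ?G" .
    have "(\<Sum>i<m. a i * (f (xs i) + g (xs i))) = (\<Sum>i<m. a i * f (xs i)) + (\<Sum>i<m. a i * g (xs i))"
      by (simp add: distrib_left sum.distrib)
    then have "\<bar>\<Sum>i<m. a i * (f (xs i) + g (xs i))\<bar> \<le> ?F + ?G"
      using bf bg by linarith
    then show ?thesis
      unfolding t using rkhs_norm_nonneg[OF f] rkhs_norm_nonneg[OF g]
      by (simp add: power2_le_iff_abs_le)
  qed
  then show ?thesis unfolding in_rkhs_def bdd_above_def by blast
qed

lemma kmat_carrier [simp]: "kmat K P Q \<in> carrier_mat (length P) (length Q)"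
  by (simp add: kmat_def)

lemma kmat_dims [simp]: "dim_row (kmat K P Q) = length P" "dim_col (kmat K P Q) = length Q"
  by (simp_all add: kmat_def)

lemma kmat_index [simp]: "i < length P \<Longrightarrow> j < length Q \<Longrightarrow> kmat K P Q $$ (i, j) = K (P ! i) (Q ! j)"
  by (simp add: kmat_def)

lemma kmat_mult_vec_carrier [simp]:
  "v \<in> carrier_vec (length Q) \<Longrightarrow> kmat K P Q *\<^sub>v v \<in> carrier_vec (length P)"
  by (rule mult_mat_vec_carrier[OF kmat_carrier])

lemma kmat_mult_vec_index:
  assumes "i < length P"
  shows "(kmat K P Q *\<^sub>v a) $ i = vec (length Q) (\<lambda>j. K (P ! i) (Q ! j)) \<bullet> a"
proof -
  have "row (kmat K P Q) i = vec (length Q) (\<lambda>j. K (P ! i) (Q ! j))"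
    using assms by (intro eq_vecI) auto
  then show ?thesis using assms by simp
qed

lemma kmat_bilinear:
  assumes "a \<in> carrier_vec (length P)" "b \<in> carrier_vec (length Q)"
  shows "a \<bullet> (kmat K P Q *\<^sub>v b) = (\<Sum>i<length P. \<Sum>j<length Q. a $ i * b $ j * K (P ! i) (Q ! j))"
  using assms
  by (simp add: scalar_prod_def mult_mat_vec_def row_def kmat_def sum_distrib_left atLeast0LessThan
      ac_simps)

lemma kernel_quad_form_kmat:
  "a \<in> carrier_vec (length P) \<Longrightarrow>
   kernel_quad_form K ((!) P) (($) a) (length P) = a \<bullet> (kmat K P P *\<^sub>v a)"
  unfolding kernel_quad_form_def by (simp add: kmat_bilinear)

lemma pd_kernel_kmat_nonneg:
  "pd_kernel K \<Longrightarrow> a \<in> carrier_vec (length P) \<Longrightarrow> 0 \<le> a \<bullet> (kmat K P P *\<^sub>v a)"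
  using pd_kernel_quad_form_nonneg kernel_quad_form_kmat by metis

lemma kmat_bilinear_swap:
  assumes "\<And>x y. K x y = K y x" "u \<in> carrier_vec (length P)" "w \<in> carrier_vec (length Q)"
  shows "u \<bullet> (kmat K P Q *\<^sub>v w) = w \<bullet> (kmat K Q P *\<^sub>v u)"
  unfolding kmat_bilinear[OF assms(2,3)] kmat_bilinear[OF assms(3,2)]
  by (subst sum.swap) (simp add: ac_simps assms(1))

lemma kmat_append_quad_form:
  assumes sym: "\<And>x y. K x y = K y x"
    and u: "u \<in> carrier_vec (length P)" and w: "w \<in> carrier_vec (length Q)"
  shows "(u @\<^sub>v w) \<bullet> (kmat K (P @ Q) (P @ Q) *\<^sub>v (u @\<^sub>v w)) =
     u \<bullet> (kmat K P P *\<^sub>v u) + 2 * (w \<bullet> (kmat K Q P *\<^sub>v u)) + w \<bullet> (kmat K Q Q *\<^sub>v w)"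
proof -
  have blocks: "kmat K (P @ Q) (P @ Q) =
      four_block_mat (kmat K P P) (kmat K P Q) (kmat K Q P) (kmat K Q Q)"
    by (intro eq_matI) (auto simp: kmat_def nth_append)
  have "kmat K (P @ Q) (P @ Q) *\<^sub>v (u @\<^sub>v w) =
     (kmat K P P *\<^sub>v u + kmat K P Q *\<^sub>v w) @\<^sub>v (kmat K Q P *\<^sub>v u + kmat K Q Q *\<^sub>v w)"
    unfolding blocks by (rule four_block_mat_mult_vec) (use u w in auto)
  then have "(u @\<^sub>v w) \<bullet> (kmat K (P @ Q) (P @ Q) *\<^sub>v (u @\<^sub>v w)) =
     u \<bullet> (kmat K P P *\<^sub>v u + kmat K P Q *\<^sub>v w) + w \<bullet> (kmat K Q P *\<^sub>v u + kmat K Q Q *\<^sub>v w)"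
    using u w by (simp add: scalar_prod_append[of _ "length P" _ "length Q"] add_carrier_vec)
  also have "\<dots> = u \<bullet> (kmat K P P *\<^sub>v u) + u \<bullet> (kmat K P Q *\<^sub>v w)
      + (w \<bullet> (kmat K Q P *\<^sub>v u) + w \<bullet> (kmat K Q Q *\<^sub>v w))"
    using u w
    by (simp add: scalar_prod_add_distrib[of _ "length P"] scalar_prod_add_distrib[of _ "length Q"])
  also have "u \<bullet> (kmat K P Q *\<^sub>v w) = w \<bullet> (kmat K Q P *\<^sub>v u)"
    by (rule kmat_bilinear_swap[OF sym u w])
  finally show ?thesis by simp
qed

lemma kmat_mult_vec_uminus:
  "w \<in> carrier_vec (length Q) \<Longrightarrow> kmat K P Q *\<^sub>v (- w) = - (kmat K P Q *\<^sub>v w)"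
  by (intro eq_vecI) auto

lemma kmat_append_quad_form_neg:
  assumes sym: "\<And>x y. K x y = K y x"
    and u: "u \<in> carrier_vec (length P)" and w: "w \<in> carrier_vec (length Q)"
  shows "(u @\<^sub>v - w) \<bullet> (kmat K (P @ Q) (P @ Q) *\<^sub>v (u @\<^sub>v - w)) =
     u \<bullet> (kmat K P P *\<^sub>v u) - 2 * (w \<bullet> (kmat K Q P *\<^sub>v u)) + w \<bullet> (kmat K Q Q *\<^sub>v w)"
  using kmat_append_quad_form[OF sym u, of "- w"] w by (simp add: kmat_mult_vec_uminus)

lemma sprod_vec_of_list_map:
  "a \<bullet> vec_of_list (map h P) = (\<Sum>i<length P. a $ i * h (P ! i))"
  by (simp add: scalar_prod_def atLeast0LessThan vec_of_list_index)

lemma vec_of_list_append: "vec_of_list (xs @ ys) = vec_of_list xs @\<^sub>v vec_of_list ys"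
  by (intro eq_vecI) (auto simp: vec_of_list_index nth_append)

lemma vec_of_list_map_carrier: "vec_of_list (map h P) \<in> carrier_vec (length P)"
  by (simp only: carrier_vec_def mem_Collect_eq dim_vec_of_list length_map)

lemma rkhs_lin_comb_power2_le_kmat:
  assumes "in_rkhs K h" "pd_kernel K" "a \<in> carrier_vec (length P)"
  shows "(a \<bullet> vec_of_list (map h P))\<^sup>2 \<le> (rkhs_norm K h)\<^sup>2 * (a \<bullet> (kmat K P P *\<^sub>v a))"
  using rkhs_lin_comb_power2_le[OF assms(1)
      pd_kernel_quad_form_nonneg[OF assms(2), of "(!) P" "($) a" "length P"]]
  unfolding sprod_vec_of_list_map kernel_quad_form_kmat[OF assms(3)] .

definition ones_vec :: "nat \<Rightarrow> real vec" where
  "ones_vec n = vec n (\<lambda>_. 1)"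

lemma ones_vec_carrier [simp]: "ones_vec n \<in> carrier_vec n"
  by (simp add: ones_vec_def)

lemma ones_vec_sprod_self: "ones_vec n \<bullet> ones_vec n = real n"
  by (simp add: ones_vec_def scalar_prod_def)

lemma ones_vec_sprod_vec_of_list: "ones_vec (length Z) \<bullet> vec_of_list (map h Z) = (\<Sum>z\<leftarrow>Z. h z)"
  unfolding sprod_vec_of_list_map by (simp add: ones_vec_def sum_list_sum_nth atLeast0LessThan)

lemma mat_total_eq_sprod: "A \<in> carrier_mat n m \<Longrightarrow> mat_total A = ones_vec n \<bullet> (A *\<^sub>v ones_vec m)"
  by (simp add: mat_total_def scalar_prod_def mult_mat_vec_def row_def ones_vec_def atLeast0LessThan)

definition reg_gram :: "('a \<Rightarrow> 'a \<Rightarrow> real) \<Rightarrow> real \<Rightarrow> 'a list \<Rightarrow> real mat" where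
  "reg_gram k \<sigma> P = \<sigma>\<^sup>2 \<cdot>\<^sub>m 1\<^sub>m (length P) + kmat k P P"

lemma reg_gram_carrier [simp]: "reg_gram k \<sigma> P \<in> carrier_mat (length P) (length P)"
  by (simp add: reg_gram_def)

lemma reg_gram_mult_vec:
  "u \<in> carrier_vec (length P) \<Longrightarrow> reg_gram k \<sigma> P *\<^sub>v u = \<sigma>\<^sup>2 \<cdot>\<^sub>v u + kmat k P P *\<^sub>v u"
  unfolding reg_gram_def by (intro eq_vecI) (auto simp: add_scalar_prod_distrib[of _ "length P"])

lemma reg_gram_quad_form:
  "u \<in> carrier_vec (length P) \<Longrightarrow>
   u \<bullet> (reg_gram k \<sigma> P *\<^sub>v u) = \<sigma>\<^sup>2 * (u \<bullet> u) + u \<bullet> (kmat k P P *\<^sub>v u)"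
  by (simp add: reg_gram_mult_vec scalar_prod_add_distrib[of _ "length P"])

lemma reg_gram_quad_form_ge:
  "pd_kernel k \<Longrightarrow> u \<in> carrier_vec (length P) \<Longrightarrow> \<sigma>\<^sup>2 * (u \<bullet> u) \<le> u \<bullet> (reg_gram k \<sigma> P *\<^sub>v u)"
  by (simp add: reg_gram_quad_form pd_kernel_kmat_nonneg)

lemma kmat_noisy_distinct: "distinct P \<Longrightarrow> kmat (noisy_kernel k \<sigma>) P P = reg_gram k \<sigma> P"
  unfolding reg_gram_def by (intro eq_matI) (auto simp: kdelta_def nth_eq_iff_index_eq)

lemma kmat_noisy_disjoint: "set P \<inter> set Q = {} \<Longrightarrow> kmat (noisy_kernel k \<sigma>) P Q = kmat k P Q"
  by (intro eq_matI) (auto simp: kdelta_def dest: nth_mem)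

lemma reg_gram_invertible:
  assumes "pd_kernel k" "\<sigma> > 0"
  shows "reg_gram k \<sigma> P \<in> Units (ring_mat TYPE(real) (length P) ())"
proof -
  let ?M = "reg_gram k \<sigma> P"
  have "Determinant.det ?M \<noteq> 0"
  proof
    assume "Determinant.det ?M = 0"
    then obtain v where v: "v \<in> carrier_vec (length P)" "v \<noteq> 0\<^sub>v (length P)" "?M *\<^sub>v v = 0\<^sub>v (length P)"
      using det_0_iff_vec_prod_zero_field[OF reg_gram_carrier] by blast
    have "0 < v \<bullet> v" using conjugate_square_greater_0_vec[OF v(1)] v(2) by simp
    moreover have "\<sigma>\<^sup>2 * (v \<bullet> v) \<le> 0"
      using reg_gram_quad_form_ge[OF assms(1) v(1), of \<sigma>] v by simp
    ultimately show False using assms(2) by (simp add: mult_le_0_iff)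
  qed
  then show ?thesis by (rule det_non_zero_imp_unit[OF reg_gram_carrier])
qed

lemma reg_inv_inverse:
  assumes "pd_kernel k" "\<sigma> > 0"
  shows "reg_inv k \<sigma> P \<in> carrier_mat (length P) (length P)"
    and "reg_gram k \<sigma> P * reg_inv k \<sigma> P = 1\<^sub>m (length P)"
    and "reg_inv k \<sigma> P * reg_gram k \<sigma> P = 1\<^sub>m (length P)"
proof -
  obtain R where R: "mat_inverse (reg_gram k \<sigma> P) = Some R"
  proof (cases "mat_inverse (reg_gram k \<sigma> P)")
    case None
    then show ?thesis
      using mat_inverse(1)[OF reg_gram_carrier None, where b = "()"] reg_gram_invertible[OF assms, of P]
      by blast
  qed
  have "reg_inv k \<sigma> P = R"
    using R by (simp add: reg_inv_def reg_gram_def)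
  then show "reg_inv k \<sigma> P \<in> carrier_mat (length P) (length P)"
    "reg_gram k \<sigma> P * reg_inv k \<sigma> P = 1\<^sub>m (length P)"
    "reg_inv k \<sigma> P * reg_gram k \<sigma> P = 1\<^sub>m (length P)"
    using mat_inverse(2)[OF reg_gram_carrier R] by auto
qed

lemma reg_inv_symmetric:
  assumes "pd_kernel k" "\<sigma> > 0"
  shows "transpose_mat (reg_inv k \<sigma> P) = reg_inv k \<sigma> P"
proof -
  let ?n = "length P" and ?M = "reg_gram k \<sigma> P" and ?R = "reg_inv k \<sigma> P"
  note R = reg_inv_inverse[OF assms, of P]
  have Rt: "transpose_mat ?R \<in> carrier_mat ?n ?n" using R(1) by simp
  have M: "transpose_mat ?M = ?M"
    using pd_kernel_sym[OF assms(1)] by (intro eq_matI) (auto simp: reg_gram_def)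
  have "transpose_mat ?R * ?M = transpose_mat (transpose_mat ?M * ?R)"
    using R(1) by (simp add: transpose_mult[of _ ?n ?n])
  also have "\<dots> = 1\<^sub>m ?n" using R(2) M by simp
  finally have left_inv: "transpose_mat ?R * ?M = 1\<^sub>m ?n" .
  have "transpose_mat ?R = transpose_mat ?R * (?M * ?R)" using R Rt by simp
  also have "\<dots> = (transpose_mat ?R * ?M) * ?R"
    using R Rt by (simp add: assoc_mult_mat[of _ ?n ?n _ ?n _ ?n])
  also have "\<dots> = ?R" using left_inv R by simp
  finally show ?thesis .
qed

lemma reg_inv_mult_vec_carrier [simp]:
  "pd_kernel k \<Longrightarrow> \<sigma> > 0 \<Longrightarrow> v \<in> carrier_vec (length P) \<Longrightarrow> reg_inv k \<sigma> P *\<^sub>v v \<in> carrier_vec (length P)"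
  using reg_inv_inverse(1) by (rule mult_mat_vec_carrier)

lemma reg_gram_mult_reg_inv_vec:
  assumes "pd_kernel k" "\<sigma> > 0" "v \<in> carrier_vec (length P)"
  shows "reg_gram k \<sigma> P *\<^sub>v (reg_inv k \<sigma> P *\<^sub>v v) = v"
proof -
  note R = reg_inv_inverse[OF assms(1,2), of P]
  have "reg_gram k \<sigma> P *\<^sub>v (reg_inv k \<sigma> P *\<^sub>v v) = (reg_gram k \<sigma> P * reg_inv k \<sigma> P) *\<^sub>v v"
    using R(1) assms(3) by (simp add: assoc_mult_mat_vec[of _ "length P" "length P" _ "length P"])
  then show ?thesis using R(2) assms(3) by simp
qed

lemma reg_inv_sprod_swap:
  assumes "pd_kernel k" "\<sigma> > 0" "v \<in> carrier_vec (length P)" "y \<in> carrier_vec (length P)"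
  shows "(reg_inv k \<sigma> P *\<^sub>v v) \<bullet> y = v \<bullet> (reg_inv k \<sigma> P *\<^sub>v y)"
  using transpose_vec_mult_scalar[OF reg_inv_inverse(1)[OF assms(1,2)] assms(4,3)]
    reg_inv_symmetric[OF assms(1,2)]
  by simp

definition kvec :: "('a \<Rightarrow> 'a \<Rightarrow> real) \<Rightarrow> 'a list \<Rightarrow> 'a \<Rightarrow> real vec" where
  "kvec k P z = vec (length P) (\<lambda>i. k z (P ! i))"

definition post_var :: "('a \<Rightarrow> 'a \<Rightarrow> real) \<Rightarrow> real \<Rightarrow> 'a list \<Rightarrow> 'a \<Rightarrow> real" where
  "post_var k \<sigma> P z = k z z - kvec k P z \<bullet> (reg_inv k \<sigma> P *\<^sub>v kvec k P z)"

lemma post_cov_carrier: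
  assumes "pd_kernel k" "\<sigma> > 0"
  shows "post_cov k \<sigma> P Z \<in> carrier_mat (length Z) (length Z)"
proof -
  have "transpose_mat (kmat k P Z) \<in> carrier_mat (length Z) (length P)" by simp
  from mult_carrier_mat[OF mult_carrier_mat[OF this reg_inv_inverse(1)[OF assms]] kmat_carrier]
  show ?thesis unfolding post_cov_def by (rule minus_carrier_mat)
qed

lemma post_cov_index:
  assumes pd: "pd_kernel k" and s: "\<sigma> > 0" and p: "p < length Z" and q: "q < length Z"
  shows "post_cov k \<sigma> P Z $$ (p, q) =
    k (Z ! p) (Z ! q) - kvec k P (Z ! p) \<bullet> (reg_inv k \<sigma> P *\<^sub>v kvec k P (Z ! q))"
proof -
  let ?A = "kmat k P Z" and ?R = "reg_inv k \<sigma> P"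
  have R: "?R \<in> carrier_mat (length P) (length P)" by (rule reg_inv_inverse(1)[OF pd s])
  have At: "transpose_mat ?A \<in> carrier_mat (length Z) (length P)" by simp
  have col: "col ?A j = kvec k P (Z ! j)" if "j < length Z" for j
    using that pd_kernel_sym[OF pd] by (intro eq_vecI) (auto simp: kvec_def)
  have "transpose_mat ?A * ?R * ?A = transpose_mat ?A * (?R * ?A)"
    by (rule assoc_mult_mat[OF At R kmat_carrier])
  then have "(transpose_mat ?A * ?R * ?A) $$ (p, q) = kvec k P (Z ! p) \<bullet> (?R *\<^sub>v kvec k P (Z ! q))"
    using R p q by (simp add: col_mult2[OF R kmat_carrier q] col)
  then show ?thesis
    using R p q by (simp add: post_cov_def)
qed

lemma mat_trace_post_cov_replicate:
  assumes "pd_kernel k" "\<sigma> > 0"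
  shows "mat_trace (post_cov k \<sigma> P (replicate L z)) = real L * post_var k \<sigma> P z"
proof -
  have "mat_trace (post_cov k \<sigma> P (replicate L z)) = (\<Sum>i<L. post_var k \<sigma> P z)"
    unfolding mat_trace_def using post_cov_carrier[OF assms, of P "replicate L z"]
    by (intro sum.cong) (auto simp: post_cov_index[OF assms] post_var_def)
  then show ?thesis by simp
qed

lemma mat_total_post_cov_replicate:
  assumes "pd_kernel k" "\<sigma> > 0"
  shows "mat_total (post_cov k \<sigma> P (replicate L z)) = (real L)\<^sup>2 * post_var k \<sigma> P z"
proof -
  have "mat_total (post_cov k \<sigma> P (replicate L z)) = (\<Sum>i<L. \<Sum>j<L. post_var k \<sigma> P z)"
    unfolding mat_total_def using post_cov_carrier[OF assms, of P "replicate L z"]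
    by (intro sum.cong) (auto simp: post_cov_index[OF assms] post_var_def)
  then show ?thesis by (simp add: power2_eq_square)
qed

lemma mat_total_post_cov:
  fixes P Z :: "'a list"
  assumes pd: "pd_kernel k" and s: "\<sigma> > 0"
  defines "v \<equiv> kmat k P Z *\<^sub>v ones_vec (length Z)"
  shows "mat_total (post_cov k \<sigma> P Z) =
    ones_vec (length Z) \<bullet> (kmat k Z Z *\<^sub>v ones_vec (length Z)) - (reg_inv k \<sigma> P *\<^sub>v v) \<bullet> v"
proof -
  let ?A = "kmat k P Z" and ?R = "reg_inv k \<sigma> P" and ?o = "ones_vec (length Z)"
  have R: "?R \<in> carrier_mat (length P) (length P)" by (rule reg_inv_inverse(1)[OF pd s])
  have At: "transpose_mat ?A \<in> carrier_mat (length Z) (length P)" by simp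
  have v: "v \<in> carrier_vec (length P)" unfolding v_def by simp
  have w: "transpose_mat ?A *\<^sub>v (?R *\<^sub>v v) \<in> carrier_vec (length Z)"
    using mult_mat_vec_carrier[OF At mult_mat_vec_carrier[OF R v]] .
  have "(transpose_mat ?A * ?R * ?A) *\<^sub>v ?o = (transpose_mat ?A * ?R) *\<^sub>v v"
    unfolding v_def using At R by (intro assoc_mult_mat_vec) auto
  also have "\<dots> = transpose_mat ?A *\<^sub>v (?R *\<^sub>v v)"
    using At R v by (rule assoc_mult_mat_vec)
  finally have "post_cov k \<sigma> P Z *\<^sub>v ?o = kmat k Z Z *\<^sub>v ?o - transpose_mat ?A *\<^sub>v (?R *\<^sub>v v)"
    unfolding post_cov_def using At R
    by (subst minus_mult_distrib_mat_vec[of _ "length Z" "length Z"]) auto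
  then have "mat_total (post_cov k \<sigma> P Z) =
      ?o \<bullet> (kmat k Z Z *\<^sub>v ?o) - ?o \<bullet> (transpose_mat ?A *\<^sub>v (?R *\<^sub>v v))"
    using mat_total_eq_sprod[OF post_cov_carrier[OF pd s]] w
    by (simp add: scalar_prod_minus_distrib[of _ "length Z"])
  also have "?o \<bullet> (transpose_mat ?A *\<^sub>v (?R *\<^sub>v v)) = (transpose_mat ?A *\<^sub>v (?R *\<^sub>v v)) \<bullet> ?o"
    by (rule comm_scalar_prod[OF ones_vec_carrier w])
  also have "\<dots> = (?R *\<^sub>v v) \<bullet> v"
    unfolding v_def
    by (rule transpose_vec_mult_scalar[OF kmat_carrier ones_vec_carrier
          mult_mat_vec_carrier[OF R v[unfolded v_def]]])
  finally show ?thesis .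
qed

lemma mat_total_post_cov_nonneg:
  assumes pd: "pd_kernel k" and s: "\<sigma> > 0"
  shows "0 \<le> mat_total (post_cov k \<sigma> P Z)"
proof -
  let ?o = "ones_vec (length Z)"
  define v where "v = kmat k P Z *\<^sub>v ?o"
  define w where "w = reg_inv k \<sigma> P *\<^sub>v v"
  have v: "v \<in> carrier_vec (length P)" unfolding v_def by simp
  have w: "w \<in> carrier_vec (length P)" unfolding w_def using pd s v by simp
  have Mw: "reg_gram k \<sigma> P *\<^sub>v w = v" unfolding w_def by (rule reg_gram_mult_reg_inv_vec[OF pd s v])
  have "0 \<le> (?o @\<^sub>v - w) \<bullet> (kmat k (Z @ P) (Z @ P) *\<^sub>v (?o @\<^sub>v - w))"
    using w by (intro pd_kernel_kmat_nonneg[OF pd]) simp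
  also have "\<dots> = ?o \<bullet> (kmat k Z Z *\<^sub>v ?o) - 2 * (w \<bullet> v) + w \<bullet> (kmat k P P *\<^sub>v w)"
    unfolding v_def by (rule kmat_append_quad_form_neg[OF pd_kernel_sym[OF pd] ones_vec_carrier w])
  also have "w \<bullet> (kmat k P P *\<^sub>v w) = w \<bullet> v - \<sigma>\<^sup>2 * (w \<bullet> w)"
    using reg_gram_quad_form[OF w, of k \<sigma>] Mw by simp
  also have "?o \<bullet> (kmat k Z Z *\<^sub>v ?o) - 2 * (w \<bullet> v) + (w \<bullet> v - \<sigma>\<^sup>2 * (w \<bullet> w))
      = mat_total (post_cov k \<sigma> P Z) - \<sigma>\<^sup>2 * (w \<bullet> w)"
    unfolding mat_total_post_cov[OF pd s] v_def[symmetric] w_def[symmetric] by simp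
  also have "\<dots> \<le> mat_total (post_cov k \<sigma> P Z)"
    using conjugate_square_ge_0_vec[of w] by simp
  finally show ?thesis .
qed

lemma post_var_nonneg: "pd_kernel k \<Longrightarrow> \<sigma> > 0 \<Longrightarrow> 0 \<le> post_var k \<sigma> P z"
  using mat_total_post_cov_nonneg[of k \<sigma> P "replicate 1 z"] mat_total_post_cov_replicate[of k \<sigma> P 1 z]
  by simp

lemma sum_post_mean:
  assumes pd: "pd_kernel k" and s: "\<sigma> > 0"
  shows "(\<Sum>z\<leftarrow>Z. post_mean k \<sigma> h P z) =
    (kmat k P Z *\<^sub>v ones_vec (length Z)) \<bullet> (reg_inv k \<sigma> P *\<^sub>v vec_of_list (map h P))"
proof -
  define \<alpha> where "\<alpha> = reg_inv k \<sigma> P *\<^sub>v vec_of_list (map h P)"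
  have \<alpha>: "\<alpha> \<in> carrier_vec (length P)"
    unfolding \<alpha>_def using pd s vec_of_list_map_carrier by (rule reg_inv_mult_vec_carrier)
  have post_mean: "post_mean k \<sigma> h P (Z ! i) = (kmat k Z P *\<^sub>v \<alpha>) $ i" if "i < length Z" for i
    unfolding post_mean_def \<alpha>_def[symmetric] kmat_mult_vec_index[OF that] ..
  have "(\<Sum>z\<leftarrow>Z. post_mean k \<sigma> h P z) = (\<Sum>i<length Z. post_mean k \<sigma> h P (Z ! i))"
    by (simp add: sum_list_sum_nth atLeast0LessThan)
  also have "\<dots> = ones_vec (length Z) \<bullet> (kmat k Z P *\<^sub>v \<alpha>)"
    using \<alpha> by (simp add: post_mean scalar_prod_def ones_vec_def atLeast0LessThan)
  also have "\<dots> = \<alpha> \<bullet> (kmat k P Z *\<^sub>v ones_vec (length Z))"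
    by (rule kmat_bilinear_swap[OF pd_kernel_sym[OF pd] ones_vec_carrier \<alpha>])
  also have "\<dots> = (kmat k P Z *\<^sub>v ones_vec (length Z)) \<bullet> \<alpha>"
    using \<alpha> by (intro comm_scalar_prod[of _ "length P"]) auto
  finally show ?thesis unfolding \<alpha>_def .
qed

section \<open>Confidence bounds\<close>

text \<open>The posterior error on a batch is the RKHS functional with coefficients \<open>1\<close> on the batch and
  \<open>-(\<sigma>\<^sup>2 I + K)\<^sup>-\<^sup>1 K(P, Z) 1\<close> on the observed points, whose quadratic form under
  the noisy kernel is exactly \<open>1\<^sup>T cov 1 + |Z| \<sigma>\<^sup>2\<close>.\<close>

lemma sum_post_mean_error_sq_bound:
  assumes pd: "pd_kernel k" and s: "\<sigma> > 0" and h: "in_rkhs (noisy_kernel k \<sigma>) h"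
    and dZ: "distinct Z" and dP: "distinct P" and disj: "set P \<inter> set Z = {}"
  shows "(\<Sum>z\<leftarrow>Z. h z - post_mean k \<sigma> h P z)\<^sup>2
    \<le> (rkhs_norm (noisy_kernel k \<sigma>) h)\<^sup>2 * (mat_total (post_cov k \<sigma> P Z) + real (length Z) * \<sigma>\<^sup>2)"
proof -
  let ?o = "ones_vec (length Z)"
  define y where "y = vec_of_list (map h P)"
  define v where "v = kmat k P Z *\<^sub>v ?o"
  define w where "w = reg_inv k \<sigma> P *\<^sub>v v"
  have y: "y \<in> carrier_vec (length P)" unfolding y_def by (rule vec_of_list_map_carrier)
  have v: "v \<in> carrier_vec (length P)" unfolding v_def by simp
  have w: "w \<in> carrier_vec (length P)" unfolding w_def using pd s v by simp
  have a: "?o @\<^sub>v - w \<in> carrier_vec (length (Z @ P))" using w by simp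
  have Mw: "reg_gram k \<sigma> P *\<^sub>v w = v" unfolding w_def by (rule reg_gram_mult_reg_inv_vec[OF pd s v])
  have "(?o @\<^sub>v - w) \<bullet> (kmat (noisy_kernel k \<sigma>) (Z @ P) (Z @ P) *\<^sub>v (?o @\<^sub>v - w))
      = ?o \<bullet> (reg_gram k \<sigma> Z *\<^sub>v ?o) - 2 * (w \<bullet> v) + w \<bullet> (reg_gram k \<sigma> P *\<^sub>v w)"
    using kmat_append_quad_form_neg[where K = "noisy_kernel k \<sigma>" and P = Z,
        OF pd_kernel_sym[OF pd_kernel_noisy[OF pd]] ones_vec_carrier w]
    unfolding kmat_noisy_distinct[OF dZ] kmat_noisy_distinct[OF dP] kmat_noisy_disjoint[OF disj] v_def .
  also have "\<dots> = mat_total (post_cov k \<sigma> P Z) + real (length Z) * \<sigma>\<^sup>2"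
    unfolding mat_total_post_cov[OF pd s] v_def[symmetric] w_def[symmetric] Mw
      reg_gram_quad_form[OF ones_vec_carrier] ones_vec_sprod_self by simp
  finally have quad: "(?o @\<^sub>v - w) \<bullet> (kmat (noisy_kernel k \<sigma>) (Z @ P) (Z @ P) *\<^sub>v (?o @\<^sub>v - w))
      = mat_total (post_cov k \<sigma> P Z) + real (length Z) * \<sigma>\<^sup>2" .
  have "(?o @\<^sub>v - w) \<bullet> vec_of_list (map h (Z @ P)) = ?o \<bullet> vec_of_list (map h Z) + (- w) \<bullet> y"
    unfolding y_def map_append vec_of_list_append
    by (rule scalar_prod_append[OF ones_vec_carrier _ vec_of_list_map_carrier vec_of_list_map_carrier])
      (use w in simp)
  also have "(- w) \<bullet> y = - (w \<bullet> y)"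
    using w y by (intro scalar_prod_uminus_left) simp
  also have "w \<bullet> y = v \<bullet> (reg_inv k \<sigma> P *\<^sub>v y)"
    unfolding w_def by (rule reg_inv_sprod_swap[OF pd s v y])
  also have "v \<bullet> (reg_inv k \<sigma> P *\<^sub>v y) = (\<Sum>z\<leftarrow>Z. post_mean k \<sigma> h P z)"
    unfolding v_def y_def by (rule sum_post_mean[OF pd s, symmetric])
  finally have lin: "(?o @\<^sub>v - w) \<bullet> vec_of_list (map h (Z @ P)) = (\<Sum>z\<leftarrow>Z. h z - post_mean k \<sigma> h P z)"
    unfolding ones_vec_sprod_vec_of_list sum_list_subtractf by simp
  show ?thesis
    using rkhs_lin_comb_power2_le_kmat[OF h pd_kernel_noisy[OF pd] a] unfolding lin quad .
qed

lemma sqrt_add_of_nat_mult_power2_le: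
  fixes T \<sigma> :: real
  assumes "0 \<le> T" "0 \<le> \<sigma>"
  shows "sqrt (T + real n * \<sigma>\<^sup>2) \<le> sqrt T + real n * \<sigma>"
proof (rule real_le_lsqrt)
  show "0 \<le> sqrt T + real n * \<sigma>" using assms by simp
  have "real n \<le> (real n)\<^sup>2"
    using mult_right_mono[of 1 "real n" "real n"] by (cases "n = 0") (auto simp: power2_eq_square)
  then have "real n * \<sigma>\<^sup>2 \<le> (real n * \<sigma>)\<^sup>2"
    unfolding power_mult_distrib by (rule mult_right_mono) simp
  moreover have "(sqrt T + real n * \<sigma>)\<^sup>2 = T + 2 * sqrt T * (real n * \<sigma>) + (real n * \<sigma>)\<^sup>2"
    using assms(1) by (simp add: power2_sum)
  moreover have "0 \<le> 2 * sqrt T * (real n * \<sigma>)" using assms by simp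
  ultimately show "T + real n * \<sigma>\<^sup>2 \<le> (sqrt T + real n * \<sigma>)\<^sup>2" by linarith
qed

lemma sum_post_mean_error_bound:
  assumes "pd_kernel k" "\<sigma> > 0" "in_rkhs (noisy_kernel k \<sigma>) h"
    and "distinct Z" "distinct P" "set P \<inter> set Z = {}"
  shows "\<bar>\<Sum>z\<leftarrow>Z. h z - post_mean k \<sigma> h P z\<bar>
    \<le> rkhs_norm (noisy_kernel k \<sigma>) h * (sqrt (mat_total (post_cov k \<sigma> P Z)) + real (length Z) * \<sigma>)"
proof -
  have "\<bar>\<Sum>z\<leftarrow>Z. h z - post_mean k \<sigma> h P z\<bar>
      \<le> rkhs_norm (noisy_kernel k \<sigma>) h * sqrt (mat_total (post_cov k \<sigma> P Z) + real (length Z) * \<sigma>\<^sup>2)"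
    using sum_post_mean_error_sq_bound[OF assms] rkhs_norm_nonneg[OF assms(3)]
    by (rule abs_le_mult_sqrt_of_power2_le)
  also have "\<dots> \<le> rkhs_norm (noisy_kernel k \<sigma>) h
      * (sqrt (mat_total (post_cov k \<sigma> P Z)) + real (length Z) * \<sigma>)"
    using mat_total_post_cov_nonneg[OF assms(1,2)] assms(2) rkhs_norm_nonneg[OF assms(3)]
    by (intro mult_left_mono sqrt_add_of_nat_mult_power2_le) simp_all
  finally show ?thesis .
qed

lemma power2_index_le_sprod_self:
  fixes v :: "real vec"
  assumes "j < dim_vec v"
  shows "(v $ j)\<^sup>2 \<le> v \<bullet> v"
proof -
  have "v $ j * v $ j \<le> (\<Sum>i\<in>{0..<dim_vec v}. v $ i * v $ i)"
    by (rule member_le_sum) (use assms in auto)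
  then show ?thesis by (simp add: scalar_prod_def power2_eq_square)
qed

text \<open>At an observed point the error is \<open>\<sigma>\<^sup>2 \<alpha>\<^sub>j\<close> with \<open>\<alpha> = (\<sigma>\<^sup>2 I + K)\<^sup>-\<^sup>1 y\<close>;
  testing \<open>h\<close> against \<open>\<alpha>\<close> itself bounds \<open>\<sigma>\<^sup>2 |\<alpha>|\<^sup>2 \<le> \<alpha>\<^sup>T y \<le> \<parallel>h\<parallel>\<^sup>2\<close>.\<close>

lemma post_mean_error_bound_observed:
  assumes pd: "pd_kernel k" and s: "\<sigma> > 0" and h: "in_rkhs (noisy_kernel k \<sigma>) h"
    and dP: "distinct P" and z: "z \<in> set P"
  shows "h z - post_mean k \<sigma> h P z \<le> rkhs_norm (noisy_kernel k \<sigma>) h * \<sigma>"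
proof -
  let ?B = "rkhs_norm (noisy_kernel k \<sigma>) h"
  obtain j where j: "j < length P" "z = P ! j" using z by (auto simp: in_set_conv_nth)
  define y where "y = vec_of_list (map h P)"
  define \<alpha> where "\<alpha> = reg_inv k \<sigma> P *\<^sub>v y"
  have y: "y \<in> carrier_vec (length P)" unfolding y_def by (rule vec_of_list_map_carrier)
  have \<alpha>: "\<alpha> \<in> carrier_vec (length P)" unfolding \<alpha>_def using pd s y by simp
  have M\<alpha>: "reg_gram k \<sigma> P *\<^sub>v \<alpha> = y" unfolding \<alpha>_def by (rule reg_gram_mult_reg_inv_vec[OF pd s y])
  have "(\<alpha> \<bullet> y)\<^sup>2 \<le> ?B\<^sup>2 * (\<alpha> \<bullet> y)"
    using rkhs_lin_comb_power2_le_kmat[OF h pd_kernel_noisy[OF pd] \<alpha>]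
    unfolding kmat_noisy_distinct[OF dP] M\<alpha> y_def .
  then have quad_le: "\<alpha> \<bullet> y \<le> ?B\<^sup>2"
  proof (cases "\<alpha> \<bullet> y > 0")
    case False
    then show ?thesis using zero_le_power2[of ?B] by linarith
  qed (simp add: power2_eq_square)
  have "(\<sigma> * \<alpha> $ j)\<^sup>2 \<le> \<sigma>\<^sup>2 * (\<alpha> \<bullet> \<alpha>)"
    unfolding power_mult_distrib using \<alpha> j by (intro mult_left_mono power2_index_le_sprod_self) simp_all
  also have "\<dots> \<le> \<alpha> \<bullet> y"
    using reg_gram_quad_form_ge[OF pd \<alpha>, of \<sigma>] unfolding M\<alpha> .
  finally have "(\<sigma> * \<alpha> $ j)\<^sup>2 \<le> ?B\<^sup>2 * 1" using quad_le by simp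
  from abs_le_mult_sqrt_of_power2_le[OF this rkhs_norm_nonneg[OF h]]
  have \<alpha>_le: "\<sigma> * \<alpha> $ j \<le> ?B" by (simp add: abs_le_iff)
  have "h z = y $ j" unfolding y_def vec_of_list_index using j by simp
  also have "\<dots> = \<sigma>\<^sup>2 * \<alpha> $ j + (kmat k P P *\<^sub>v \<alpha>) $ j"
    using M\<alpha> reg_gram_mult_vec[OF \<alpha>, of k \<sigma>] j \<alpha> by auto
  also have "(kmat k P P *\<^sub>v \<alpha>) $ j = post_mean k \<sigma> h P z"
    unfolding post_mean_def \<alpha>_def y_def j(2) kmat_mult_vec_index[OF j(1)] ..
  finally have "h z - post_mean k \<sigma> h P z = \<sigma> * (\<sigma> * \<alpha> $ j)" by (simp add: power2_eq_square)
  then show ?thesis using \<alpha>_le s by (simp add: mult.commute)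
qed

lemma post_mean_error_bound:
  assumes pd: "pd_kernel k" and s: "\<sigma> > 0" and h: "in_rkhs (noisy_kernel k \<sigma>) h"
    and dP: "distinct P"
  shows "h z \<le> post_mean k \<sigma> h P z + rkhs_norm (noisy_kernel k \<sigma>) h * (sqrt (post_var k \<sigma> P z) + \<sigma>)"
proof (cases "z \<in> set P")
  case True
  then show ?thesis
    using post_mean_error_bound_observed[OF assms True]
      mult_nonneg_nonneg[OF rkhs_norm_nonneg[OF h]
        real_sqrt_ge_zero[OF post_var_nonneg[OF pd s, of P z]]]
    unfolding distrib_left by linarith
next
  case False
  then show ?thesis
    using sum_post_mean_error_bound[OF pd s h _ dP, of "[z]"]
      mat_total_post_cov_replicate[OF pd s, of P 1 z] post_var_nonneg[OF pd s]
    by (simp add: abs_le_iff)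
qed

section \<open>Regret of a batch chosen by the acquisition rule\<close>

lemma noise_rkhs_abs_le:
  assumes "in_rkhs (noise_kernel \<sigma>) g" "\<sigma> > 0"
  shows "\<bar>g z\<bar> \<le> rkhs_norm (noise_kernel \<sigma>) g * \<sigma>"
  using rkhs_abs_le[OF assms(1), of z] assms(2) by (simp add: kdelta_def)

lemma sum_post_mean_le:
  fixes k :: "'a \<Rightarrow> 'a \<Rightarrow> real" and \<sigma> :: real and f g h :: "'a \<Rightarrow> real" and P Z :: "'a list"
  defines "B \<equiv> rkhs_norm (noisy_kernel k \<sigma>) h" and "G \<equiv> rkhs_norm (noise_kernel \<sigma>) g"
  assumes pd: "pd_kernel k" and s: "\<sigma> > 0" and h: "in_rkhs (noisy_kernel k \<sigma>) h"
    and g: "in_rkhs (noise_kernel \<sigma>) g" and h_def: "h = (\<lambda>z. f z + g z)"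
    and dZ: "distinct Z" and dP: "distinct P" and disj: "set P \<inter> set Z = {}"
  shows "(\<Sum>z\<leftarrow>Z. post_mean k \<sigma> h P z)
    \<le> (\<Sum>z\<leftarrow>Z. f z) + B * sqrt (mat_total (post_cov k \<sigma> P Z)) + real (length Z) * ((B + G) * \<sigma>)"
proof -
  have "- (\<Sum>z\<leftarrow>Z. h z - post_mean k \<sigma> h P z)
      \<le> B * sqrt (mat_total (post_cov k \<sigma> P Z)) + real (length Z) * (B * \<sigma>)"
    using sum_post_mean_error_bound[OF pd s h dZ dP disj] unfolding B_def
    by (simp add: algebra_simps abs_le_iff)
  moreover have "(\<Sum>z\<leftarrow>Z. g z) \<le> (\<Sum>z\<leftarrow>Z. G * \<sigma>)"
    using noise_rkhs_abs_le[OF g s] unfolding G_def by (intro sum_list_mono) (simp add: abs_le_iff)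
  moreover have "(\<Sum>z\<leftarrow>Z. G * \<sigma>) = real (length Z) * (G * \<sigma>)"
    by (simp add: map_replicate_const sum_list_replicate)
  moreover have "(\<Sum>z\<leftarrow>Z. h z - post_mean k \<sigma> h P z)
      = (\<Sum>z\<leftarrow>Z. f z) + (\<Sum>z\<leftarrow>Z. g z) - (\<Sum>z\<leftarrow>Z. post_mean k \<sigma> h P z)"
    by (simp add: h_def sum_list_subtractf sum_list_addf)
  ultimately have "(\<Sum>z\<leftarrow>Z. post_mean k \<sigma> h P z) \<le> (\<Sum>z\<leftarrow>Z. f z)
      + B * sqrt (mat_total (post_cov k \<sigma> P Z)) + real (length Z) * (B * \<sigma>) + real (length Z) * (G * \<sigma>)"
    by linarith
  then show ?thesis by (simp add: algebra_simps)
qed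

text \<open>The penalty \<open>- sqrt (1\<^sup>T cov 1) / L\<close> in the acquisition value absorbs the error
  of the posterior mean on the batch.\<close>

lemma batch_regret_bound:
  fixes k :: "'a \<Rightarrow> 'a \<Rightarrow> real" and \<sigma> :: real and f g h :: "'a \<Rightarrow> real" and P Z :: "'a list"
  defines "B \<equiv> rkhs_norm (noisy_kernel k \<sigma>) h" and "G \<equiv> rkhs_norm (noise_kernel \<sigma>) g"
    and "C \<equiv> post_cov k \<sigma> P Z" and "L \<equiv> real (length Z)"
  assumes pd: "pd_kernel k" and s: "\<sigma> > 0"
    and f: "in_rkhs k f" and g: "in_rkhs (noise_kernel \<sigma>) g" and h_def: "h = (\<lambda>z. f z + g z)"
    and dP: "distinct P" and dZ: "distinct Z" and disj: "set P \<inter> set Z = {}" and Z: "Z \<noteq> []"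
    and choice: "post_mean k \<sigma> h P xstar + B * sqrt (post_var k \<sigma> P xstar)
      \<le> (\<Sum>z\<leftarrow>Z. post_mean k \<sigma> h P z) / L + B * (2 * sqrt (mat_trace C / L) - sqrt (mat_total C) / L)"
  shows "f xstar - (\<Sum>z\<leftarrow>Z. f z) / L \<le> 2 * B * sqrt (mat_trace C / L) + 2 * (B + G) * \<sigma>"
proof -
  have h: "in_rkhs (noisy_kernel k \<sigma>) h"
    unfolding h_def by (rule in_rkhs_add[OF pd pd_kernel_noise f g])
  have L: "1 \<le> L" using Z unfolding L_def by (cases Z) auto
  have "f xstar \<le> post_mean k \<sigma> h P xstar + B * sqrt (post_var k \<sigma> P xstar) + (B + G) * \<sigma>"
    using post_mean_error_bound[OF pd s h dP, of xstar] noise_rkhs_abs_le[OF g s, of xstar] h_def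
    unfolding B_def G_def distrib_left distrib_right by (simp add: abs_le_iff)
  also have "\<dots> \<le> (\<Sum>z\<leftarrow>Z. post_mean k \<sigma> h P z) / L
      + B * (2 * sqrt (mat_trace C / L) - sqrt (mat_total C) / L) + (B + G) * \<sigma>"
    using choice by (rule add_right_mono)
  also have "(\<Sum>z\<leftarrow>Z. post_mean k \<sigma> h P z) / L
      \<le> ((\<Sum>z\<leftarrow>Z. f z) + B * sqrt (mat_total C) + L * ((B + G) * \<sigma>)) / L"
    using sum_post_mean_le[OF pd s h g h_def dZ dP disj] L
    unfolding B_def G_def C_def L_def by (intro divide_right_mono) auto
  also have "\<dots> = (\<Sum>z\<leftarrow>Z. f z) / L + B * (sqrt (mat_total C) / L) + (B + G) * \<sigma>"
    using L by (simp add: add_divide_distrib)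
  finally show ?thesis by (simp add: algebra_simps)
qed

lemma acq_eq:
  "acq k \<sigma> h B x L n Z =
    (\<Sum>z\<leftarrow>Z. post_mean k \<sigma> h (queried x ((n - 1) * L)) z) / real L
    + B * (2 * sqrt (mat_trace (post_cov k \<sigma> (queried x ((n - 1) * L)) Z) / real L)
           - sqrt (mat_total (post_cov k \<sigma> (queried x ((n - 1) * L)) Z)) / real L)"
  by (simp add: acq_def Let_def real_sqrt_divide)

lemma acq_replicate:
  assumes "pd_kernel k" "\<sigma> > 0" "1 \<le> L"
  shows "acq k \<sigma> h B x L n (replicate L z) =
    post_mean k \<sigma> h (queried x ((n - 1) * L)) z + B * sqrt (post_var k \<sigma> (queried x ((n - 1) * L)) z)"
  using assms(3)
  by (simp add: acq_eq mat_trace_post_cov_replicate[OF assms(1,2)]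
      mat_total_post_cov_replicate[OF assms(1,2)]
      sum_list_replicate real_sqrt_mult)

lemma distinct_queried:
  assumes "inj_on x {1..t}"
  shows "distinct (queried x t)"
proof -
  have "set [1..<t + 1] = {1..t}" by auto
  then show ?thesis unfolding queried_def distinct_map using assms by simp
qed

lemma queried_append_batch:
  assumes "1 \<le> n"
  shows "queried x ((n - 1) * L) @ batch x L n = queried x (n * L)"
proof -
  have "n * L = (n - 1) * L + L" using assms by (cases n) auto
  then show ?thesis
    unfolding queried_def batch_def map_append[symmetric]
    using upt_add_eq_append[of 1 "(n - 1) * L + 1" L] by (simp add: ac_simps)
qed

lemma length_batch:
  assumes "1 \<le> n"
  shows "length (batch x L n) = L"
proof -
  have "(n - 1) * L + length (batch x L n) = n * L"
    using arg_cong[OF queried_append_batch[OF assms, of x L], of length]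
    unfolding queried_def length_append length_map length_upt by simp
  moreover have "n * L = (n - 1) * L + L" using assms by (cases n) auto
  ultimately show ?thesis by simp
qed

lemma sum_list_batch:
  assumes "1 \<le> n"
  shows "(\<Sum>z\<leftarrow>batch x L n. F z) = (\<Sum>i=1..L. F (x ((n - 1) * L + i)))"
proof -
  have nL: "n * L = (n - 1) * L + L" using assms by (cases n) auto
  have "(\<Sum>z\<leftarrow>batch x L n. F z) = sum (F \<circ> x) {(n - 1) * L + 1..<n * L + 1}"
    unfolding batch_def map_map interv_sum_list_conv_sum_set_nat set_upt ..
  also have "{(n - 1) * L + 1..<n * L + 1} = {1 + (n - 1) * L..<(L + 1) + (n - 1) * L}"
    by (auto simp: nL)
  also have "sum (F \<circ> x) \<dots> = (\<Sum>i\<in>{1..<L + 1}. F (x (i + (n - 1) * L)))"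
    using sum.shift_bounds_nat_ivl[of "F \<circ> x" 1 "(n - 1) * L" "L + 1"] by simp
  also have "\<dots> = (\<Sum>i=1..L. F (x ((n - 1) * L + i)))"
    by (simp add: atLeastLessThanSuc_atLeastAtMost add.commute)
  finally show ?thesis .
qed

theorem mainTheorem17:
  fixes k :: "'a \<Rightarrow> 'a \<Rightarrow> real" and \<sigma> :: real
    and f g h :: "'a \<Rightarrow> real" and x :: "nat \<Rightarrow> 'a"
    and L N n :: nat and xstar :: 'a
  assumes kernel: "pd_kernel k"
    and sigma_pos: "\<sigma> > 0"
    and f_rkhs: "in_rkhs k f"
    and g_rkhs: "in_rkhs (\<lambda>u v. \<sigma>\<^sup>2 * kdelta u v) g"
    and h_def: "h = (\<lambda>z. f z + g z)"
    and L_pos: "L \<ge> 1"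
    and n_range: "1 \<le> n" "n \<le> N"
    and distinct: "inj_on x {1..N*L}"
    and alg: "\<And>m Z. 1 \<le> m \<Longrightarrow> m \<le> N \<Longrightarrow> length Z = L \<Longrightarrow>
       acq k \<sigma> h (rkhs_norm (\<lambda>u v. k u v + \<sigma>\<^sup>2 * kdelta u v) h) x L m Z
       \<le> acq k \<sigma> h (rkhs_norm (\<lambda>u v. k u v + \<sigma>\<^sup>2 * kdelta u v) h) x L m (batch x L m)"
    and xstar_max: "\<And>z. f z \<le> f xstar"
  shows "(1 / real L) * (\<Sum>i=1..L. f xstar - f (x ((n-1)*L + i)))
     \<le> 2 * rkhs_norm (\<lambda>u v. k u v + \<sigma>\<^sup>2 * kdelta u v) h
          * sqrt (mat_trace (post_cov k \<sigma> (queried x ((n-1)*L)) (batch x L n)) / real L)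
       + 2 * (rkhs_norm (\<lambda>u v. k u v + \<sigma>\<^sup>2 * kdelta u v) h
              + rkhs_norm (\<lambda>u v. \<sigma>\<^sup>2 * kdelta u v) g) * \<sigma>"
proof -
  define P where "P = queried x ((n - 1) * L)"
  define Z where "Z = batch x L n"
  have len: "length Z = L" unfolding Z_def by (rule length_batch[OF n_range(1)])
  have "distinct (P @ Z)"
    unfolding P_def Z_def queried_append_batch[OF n_range(1)]
    using mult_le_mono1[OF n_range(2)] by (intro distinct_queried inj_on_subset[OF distinct]) auto
  then have dP: "distinct P" and dZ: "distinct Z" and disj: "set P \<inter> set Z = {}" by simp_all
  have "Z \<noteq> []" using len L_pos by auto
  note regret = batch_regret_bound[OF kernel sigma_pos f_rkhs g_rkhs h_def dP dZ disj this, unfolded len]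
  have "post_mean k \<sigma> h P xstar + rkhs_norm (noisy_kernel k \<sigma>) h * sqrt (post_var k \<sigma> P xstar)
      \<le> (\<Sum>z\<leftarrow>Z. post_mean k \<sigma> h P z) / real L + rkhs_norm (noisy_kernel k \<sigma>) h *
         (2 * sqrt (mat_trace (post_cov k \<sigma> P Z) / real L)
          - sqrt (mat_total (post_cov k \<sigma> P Z)) / real L)"
    using alg[OF n_range, of "replicate L xstar"]
    unfolding acq_replicate[OF kernel sigma_pos L_pos] P_def[symmetric] Z_def[symmetric]
    unfolding acq_eq P_def[symmetric] by simp
  then have "f xstar - (\<Sum>z\<leftarrow>Z. f z) / real L
      \<le> 2 * rkhs_norm (noisy_kernel k \<sigma>) h * sqrt (mat_trace (post_cov k \<sigma> P Z) / real L)
        + 2 * (rkhs_norm (noisy_kernel k \<sigma>) h + rkhs_norm (noise_kernel \<sigma>) g) * \<sigma>"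
    by (rule regret)
  moreover have "(\<Sum>i=1..L. f xstar - f (x ((n - 1) * L + i))) = real L * f xstar - (\<Sum>z\<leftarrow>Z. f z)"
    unfolding Z_def sum_list_batch[OF n_range(1)] by (simp add: sum_subtractf)
  ultimately show ?thesis
    unfolding P_def Z_def using L_pos by (simp add: diff_divide_distrib)
qed

end
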